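(* Fix $n\ge1$, a finite set of permutation matrices $\{P_1,\dots,P_M\}\subset\mathcal{B}$, and a probability distribution $\mu_0$ on $\mathcal{B}$ with $\mu_0(V_i)>0$ for every $i$, where $V_i=\{X\in\mathcal{B}:\|X-P_i\|_F<\|X-P_j\|_F\text{ for all }j\ne i\}$. Let $v_\theta^\star$ minimize $$L_{\mathrm{CFM}}(v)=\mathbb{E}_{t,X_0}\Bigl[\bigl\|v(X_t,t)-(P^\star(X_0)-X_0)\bigr\|_F^2\Bigr],$$ with $t\sim\mathrm{Unif}(0,1)$, $X_0\sim\mu_0$, $P^\star(X_0)=\arg\min_{P\in\{P_1,\dots,P_M\}}\|X_0-P\|_F$, and $X_t=(1-t)X_0+tP^\star(X_0)$. Draw $K$ i.i.d. samples $X_0^{(1)},\dots,X_0^{(K)}\sim\mu_0$, integrate the ODE $\dot X_t=v_\theta^\star(X_t,t)$ from each to time $1$, and apply Hungarian rounding to each endpoint. Then the resulting $K$ rounded permutations contain every $P_i$, $i=1,\dots,M$, with probability tending to $1$ as $K\to\infty$.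
   Context: $\|\cdot\|_F$ is the Frobenius norm. $\mathcal{B}\subseteq\mathbb{R}^{n\times n}$ is the ambient set of matrices in which the flow takes place (in the paper, the set of matrices with row and column sums equal to one, containing all permutation matrices). Hungarian rounding maps a matrix $X$ to a permutation matrix $P$ maximizing $\operatorname{tr}(X^\top P)$ over all $n\times n$ permutation matrices. *)

theory Defs
  imports "HOL-Analysis.Analysis" "HOL-Probability.Probability"
begin

text \<open>n x n real matrices are represented as real^'n^'n for a finite index type 'n
 (so n = CARD('n) >= 1 is arbitrary but fixed).\<close>

definition frob :: "real^'n^'n \<Rightarrow> real" where
  "frob X = sqrt (\<Sum>i\<in>UNIV. \<Sum>j\<in>UNIV. (X $ i $ j)^2)"

definition Bset :: "(real^'n^'n) set" where
  "Bset = {X. (\<forall>i. (\<Sum>j\<in>UNIV. X $ i $ j) = 1) \<and> (\<forall>j. (\<Sum>i\<in>UNIV. X $ i $ j) = 1)}"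

definition perm_mat :: "('n \<Rightarrow> 'n) \<Rightarrow> real^'n^'n" where
  "perm_mat p = (\<chi> i j. if p i = j then 1 else 0)"

definition is_perm_mat :: "real^'n^'n \<Rightarrow> bool" where
  "is_perm_mat X \<longleftrightarrow> (\<exists>p. p permutes (UNIV :: 'n set) \<and> X = perm_mat p)"

definition hungarian_round :: "real^'n^'n \<Rightarrow> real^'n^'n \<Rightarrow> bool" where
  "hungarian_round X P \<longleftrightarrow> is_perm_mat P \<and>
     (\<forall>Q. is_perm_mat Q \<longrightarrow> trace (transpose X ** Q) \<le> trace (transpose X ** P))"

text \<open>Voronoi cell V_i of P_i inside B (targets P 0, ..., P (M-1)).\<close>
definition voronoi :: "(nat \<Rightarrow> real^'n^'n) \<Rightarrow> nat \<Rightarrow> nat \<Rightarrow> (real^'n^'n) set" where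
  "voronoi P M i = {X \<in> Bset. \<forall>j<M. j \<noteq> i \<longrightarrow> frob (X - P i) < frob (X - P j)}"

text \<open>Nearest target P^*(X0); ties broken towards the least index.\<close>
definition nearest :: "(nat \<Rightarrow> real^'n^'n) \<Rightarrow> nat \<Rightarrow> real^'n^'n \<Rightarrow> real^'n^'n" where
  "nearest P M X = P (LEAST i. i < M \<and> (\<forall>j<M. frob (X - P i) \<le> frob (X - P j)))"

definition interp :: "(nat \<Rightarrow> real^'n^'n) \<Rightarrow> nat \<Rightarrow> real^'n^'n \<Rightarrow> real \<Rightarrow> real^'n^'n" where
  "interp P M X0 t = (1 - t) *\<^sub>R X0 + t *\<^sub>R nearest P M X0"

definition L_CFM :: "(real^'n^'n) measure \<Rightarrow> (nat \<Rightarrow> real^'n^'n) \<Rightarrow> nat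
     \<Rightarrow> (real^'n^'n \<Rightarrow> real \<Rightarrow> real^'n^'n) \<Rightarrow> ennreal" where
  "L_CFM mu0 P M v =
     (\<integral>\<^sup>+ z. ennreal ((frob (v (interp P M (snd z) (fst z)) (fst z)
                         - (nearest P M (snd z) - snd z)))^2)
        \<partial>(uniform_measure lborel {0..1::real} \<Otimes>\<^sub>M mu0))"

definition ode_solution :: "(real^'n^'n \<Rightarrow> real \<Rightarrow> real^'n^'n) \<Rightarrow> real^'n^'n
     \<Rightarrow> (real \<Rightarrow> real^'n^'n) \<Rightarrow> bool" where
  "ode_solution v X0 \<gamma> \<longleftrightarrow>
     (\<forall>t\<in>{0..1}. ((\<lambda>s. v (\<gamma> s) s) has_integral (\<gamma> t - X0)) {0..t})"

end

theory Submission
  imports Defs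
begin

text \<open>Along the segment from \<open>X\<^sub>0\<close> to its nearest target \<open>P\<^sup>*(X\<^sub>0)\<close>, that target stays the
  unique nearest one for \<open>t < 1\<close>. Hence the field \<open>(P\<^sup>*(X) - X) / (1 - t)\<close> reproduces the
  regression target \<open>P\<^sup>*(X\<^sub>0) - X\<^sub>0\<close> exactly and the CFM loss has minimum 0, so any minimiser
  agrees with \<open>P\<^sup>*(X\<^sub>0) - X\<^sub>0\<close> along almost every segment. The segment then solves the ODE,
  and by uniqueness the flow carries almost every \<open>X\<^sub>0\<close> to \<open>P\<^sup>*(X\<^sub>0)\<close>, which Hungarian
  rounding fixes because all permutation matrices have the same norm. So one sample is rounded
  to \<open>P\<^sub>i\<close> with probability at least \<open>\<mu>\<^sub>0(V\<^sub>i) > 0\<close>, and \<open>K\<close> independent samples miss some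
  \<open>P\<^sub>i\<close> with probability at most \<open>\<Sum>\<^sub>i (1 - \<mu>\<^sub>0(V\<^sub>i))\<^sup>K \<longrightarrow> 0\<close>.\<close>

lemma frob_eq_norm: "frob (X :: real^'n^'n) = norm X"
  by (simp add: frob_def norm_vec_def L2_set_def sum_nonneg)

lemma norm_diff_segment_less:
  fixes x a b :: "'a::real_inner"
  assumes "0 < t" "t \<le> 1" "a \<noteq> b" "norm (x - a) \<le> norm (x - b)"
  shows "norm (((1 - t) *\<^sub>R x + t *\<^sub>R a) - a) < norm (((1 - t) *\<^sub>R x + t *\<^sub>R a) - b)"
proof -
  let ?y = "(1 - t) *\<^sub>R x + t *\<^sub>R a"
  have "(norm (?y - b))\<^sup>2 - (norm (?y - a))\<^sup>2
        = (1 - t) * ((norm (x - b))\<^sup>2 - (norm (x - a))\<^sup>2) + t * (norm (a - b))\<^sup>2"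
    by (simp add: power2_norm_eq_inner inner_simps algebra_simps)
  moreover have "(norm (x - a))\<^sup>2 \<le> (norm (x - b))\<^sup>2"
    using assms(4) by (simp add: power_mono)
  moreover have "t * (norm (a - b))\<^sup>2 > 0"
    using assms(1,3) by simp
  ultimately have "(norm (?y - a))\<^sup>2 < (norm (?y - b))\<^sup>2"
    using assms(2) by (smt (verit) mult_nonneg_nonneg)
  then show ?thesis
    by (rule power_less_imp_less_base) simp
qed

definition nearest_index :: "(nat \<Rightarrow> real^'n^'n) \<Rightarrow> nat \<Rightarrow> real^'n^'n \<Rightarrow> nat" where
  "nearest_index P M X = (LEAST i. i < M \<and> (\<forall>j<M. frob (X - P i) \<le> frob (X - P j)))"

lemma nearest_eq_nearest_index: "nearest P M X = P (nearest_index P M X)"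
  by (simp add: nearest_def nearest_index_def)

lemma nearest_index_minimal:
  assumes "M > 0"
  shows "nearest_index P M X < M"
    and "\<forall>j<M. frob (X - P (nearest_index P M X)) \<le> frob (X - P j)"
proof -
  let ?d = "\<lambda>i. frob (X - P i)"
  have "Min (?d ` {..<M}) \<in> ?d ` {..<M}"
    using assms by (intro Min_in) auto
  then obtain i where "i < M" "?d i = Min (?d ` {..<M})"
    by auto
  then have "i < M \<and> (\<forall>j<M. ?d i \<le> ?d j)"
    by simp
  then have "nearest_index P M X < M \<and> (\<forall>j<M. ?d (nearest_index P M X) \<le> ?d j)"
    unfolding nearest_index_def by (rule LeastI)
  then show "nearest_index P M X < M" "\<forall>j<M. ?d (nearest_index P M X) \<le> ?d j"
    by auto
qed

lemma nearest_in_targets: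
  assumes "M > 0"
  shows "\<exists>i<M. nearest P M X = P i"
  using nearest_index_minimal(1)[OF assms] by (auto simp: nearest_eq_nearest_index)

lemma nearest_index_eqI:
  assumes "i < M" "\<forall>j<M. j \<noteq> i \<longrightarrow> frob (X - P i) < frob (X - P j)"
  shows "nearest_index P M X = i"
  unfolding nearest_index_def
proof (rule Least_equality)
  show "i < M \<and> (\<forall>j<M. frob (X - P i) \<le> frob (X - P j))"
    using assms by (metis order.strict_implies_order order_refl)
next
  fix k assume k: "k < M \<and> (\<forall>j<M. frob (X - P k) \<le> frob (X - P j))"
  show "i \<le> k"
  proof (rule ccontr)
    assume "\<not> i \<le> k"
    then have "frob (X - P i) < frob (X - P k)"
      using assms k by auto
    with k assms(1) show False
      by (meson not_le)
  qed
qed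

lemma nearest_voronoi:
  assumes "i < M" "X \<in> voronoi P M i"
  shows "nearest P M X = P i"
  using assms by (simp add: nearest_eq_nearest_index nearest_index_eqI voronoi_def)

lemma nearest_index_interp:
  assumes "M > 0" "inj_on P {..<M}" "0 \<le> t" "t < 1"
  shows "nearest_index P M (interp P M X t) = nearest_index P M X"
proof (cases "t = 0")
  case True
  then show ?thesis by (simp add: interp_def)
next
  case False
  let ?i = "nearest_index P M X"
  note i = nearest_index_minimal[OF assms(1), where P = P and X = X]
  have "frob (interp P M X t - P ?i) < frob (interp P M X t - P j)" if "j < M" "j \<noteq> ?i" for j
  proof -
    have "P j \<noteq> P ?i"
      using assms(2) that i(1) by (metis inj_onD lessThan_iff)
    then show ?thesis
      using norm_diff_segment_less[of t "P ?i" "P j" X] False assms(3,4) i(2) that(1)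
      by (simp add: frob_eq_norm interp_def nearest_eq_nearest_index)
  qed
  then show ?thesis
    using nearest_index_eqI[OF i(1)] by blast
qed

lemma nearest_index_measurable: "nearest_index P M \<in> measurable borel (count_space UNIV)"
  unfolding nearest_index_def frob_eq_norm by measurable

lemma nearest_measurable [measurable]: "nearest P M \<in> borel_measurable borel"
  unfolding nearest_eq_nearest_index[abs_def]
  by (rule measurable_compose[OF nearest_index_measurable]) simp

lemma trace_transpose_mult_eq_inner: "trace (transpose X ** (Y :: real^'n^'n)) = inner X Y"
proof -
  have "trace (transpose X ** Y) = (\<Sum>i\<in>UNIV. \<Sum>k\<in>UNIV. X $ k $ i * Y $ k $ i)"
    by (simp add: trace_def matrix_matrix_mult_def transpose_def)
  also have "\<dots> = inner X Y"
    by (subst sum.swap) (simp add: inner_vec_def)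
  finally show ?thesis .
qed

lemma inner_perm_mat_self: "inner (perm_mat p) (perm_mat p :: real^'n^'n) = real CARD('n)"
  by (simp add: inner_vec_def perm_mat_def if_distrib sum.delta cong: if_cong)

lemma hungarian_round_perm_mat:
  assumes "is_perm_mat X" "hungarian_round X Y"
  shows "Y = X"
proof -
  obtain p q where X: "X = perm_mat p" and Y: "Y = perm_mat q"
    using assms unfolding hungarian_round_def is_perm_mat_def by blast
  have "inner X X \<le> inner X Y"
    using assms unfolding hungarian_round_def trace_transpose_mult_eq_inner by blast
  then have "inner (X - Y) (X - Y) \<le> 0"
    using X Y by (simp add: inner_diff inner_commute inner_perm_mat_self)
  then have "X - Y = 0"
    by (metis inner_eq_zero_iff inner_ge_zero order.antisym)
  then show ?thesis
    by simp
qed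

definition straight_field :: "(nat \<Rightarrow> real^'n^'n) \<Rightarrow> nat \<Rightarrow> real^'n^'n \<Rightarrow> real \<Rightarrow> real^'n^'n" where
  "straight_field P M X t = (if t < 1 then (1 / (1 - t)) *\<^sub>R (nearest P M X - X) else 0)"

lemma straight_field_measurable:
  "(\<lambda>z. straight_field P M (fst z) (snd z)) \<in> borel_measurable borel"
  unfolding straight_field_def borel_prod[symmetric] by measurable

lemma straight_field_interp:
  assumes "M > 0" "inj_on P {..<M}" "0 \<le> t" "t < 1"
  shows "straight_field P M (interp P M X t) t = nearest P M X - X"
proof -
  have "nearest P M (interp P M X t) = nearest P M X"
    using nearest_index_interp[OF assms] by (simp add: nearest_eq_nearest_index)
  moreover have "nearest P M X - interp P M X t = (1 - t) *\<^sub>R (nearest P M X - X)"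
    by (simp add: interp_def algebra_simps)
  ultimately show ?thesis
    using assms(4) by (simp add: straight_field_def)
qed

lemma prob_space_uniform_01: "prob_space (uniform_measure lborel {0..1::real})"
  by (intro prob_space_uniform_measure) auto

lemma AE_uniform_01: "AE t in uniform_measure lborel {0..1::real}. 0 \<le> t \<and> t < 1"
proof -
  have "AE t in lborel. t \<noteq> (1::real)"
    by (rule AE_lborel_singleton)
  then show ?thesis
    by (intro AE_uniform_measureI) (auto elim!: AE_mp)
qed

lemma sets_pair_uniform_01:
  assumes "sets mu0 = sets (borel :: 'a::second_countable_topology measure)"
  shows "sets (uniform_measure lborel {0..1::real} \<Otimes>\<^sub>M mu0) = sets (borel :: (real \<times> 'a) measure)"
  using assms by (simp add: sets_pair_measure_cong[OF _ assms] borel_prod[symmetric])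

lemma cfm_residual_measurable:
  assumes "(\<lambda>z. v (fst z) (snd z)) \<in> borel_measurable borel" "sets mu0 = sets borel"
  shows "(\<lambda>z. v (interp P M (snd z) (fst z)) (fst z) - (nearest P M (snd z) - snd z))
           \<in> borel_measurable (uniform_measure lborel {0..1::real} \<Otimes>\<^sub>M mu0)"
proof -
  have "(\<lambda>z. (interp P M (snd z) (fst z), fst z)) \<in> borel_measurable borel"
    unfolding interp_def borel_prod[symmetric] by measurable
  from measurable_compose[OF this assms(1)]
  have [measurable]: "(\<lambda>z. v (interp P M (snd z) (fst z)) (fst z)) \<in> borel_measurable (borel \<Otimes>\<^sub>M borel)"
    by (simp add: borel_prod)
  show ?thesis
    unfolding measurable_cong_sets[OF sets_pair_uniform_01[OF assms(2)] refl] borel_prod[symmetric]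
    by measurable
qed

lemma L_CFM_eq_0_iff:
  assumes "(\<lambda>z. v (fst z) (snd z)) \<in> borel_measurable borel" "sets mu0 = sets borel"
  shows "L_CFM mu0 P M v = 0 \<longleftrightarrow>
           (AE z in uniform_measure lborel {0..1::real} \<Otimes>\<^sub>M mu0.
              v (interp P M (snd z) (fst z)) (fst z) = nearest P M (snd z) - snd z)"
  unfolding L_CFM_def frob_eq_norm
  using cfm_residual_measurable[OF assms, where P = P and M = M]
  by (subst nn_integral_0_iff_AE) auto

lemma L_CFM_straight_field:
  assumes "M > 0" "inj_on P {..<M}" "prob_space mu0" "sets mu0 = sets borel"
  shows "L_CFM mu0 P M (straight_field P M) = 0"
proof -
  let ?U = "uniform_measure lborel {0..1::real}"
  interpret U: prob_space ?U by (rule prob_space_uniform_01)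
  interpret mu: prob_space mu0 by (rule assms)
  interpret pair_prob_space ?U mu0 ..
  have "AE z in ?U \<Otimes>\<^sub>M mu0. 0 \<le> fst z \<and> fst z < 1"
    by (rule AE_pair_measure) (measurable, use AE_uniform_01 in \<open>auto elim!: AE_mp\<close>)
  then show ?thesis
    unfolding L_CFM_eq_0_iff[OF straight_field_measurable assms(4)]
    by (rule AE_mp) (auto simp: straight_field_interp[OF assms(1,2)])
qed

lemma AE_cfm_minimizer_velocity:
  assumes "M > 0" "inj_on P {..<M}" "prob_space mu0" "sets mu0 = sets borel"
    and v_meas: "(\<lambda>z. v (fst z) (snd z)) \<in> borel_measurable borel"
    and v_min: "\<forall>w. (\<lambda>z. w (fst z) (snd z)) \<in> borel_measurable borel \<longrightarrow>
                   L_CFM mu0 P M v \<le> L_CFM mu0 P M w"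
  shows "AE X in mu0. AE t in uniform_measure lborel {0..1::real}.
           v (interp P M X t) t = nearest P M X - X"
proof -
  let ?U = "uniform_measure lborel {0..1::real}"
  let ?Q = "\<lambda>t X. v (interp P M X t) t = nearest P M X - X"
  interpret U: prob_space ?U by (rule prob_space_uniform_01)
  interpret mu: prob_space mu0 by (rule assms)
  interpret pair_prob_space ?U mu0 ..
  have "L_CFM mu0 P M v \<le> L_CFM mu0 P M (straight_field P M)"
    using v_min straight_field_measurable by blast
  then have "L_CFM mu0 P M v = 0"
    by (simp add: L_CFM_straight_field[OF assms(1-4)])
  then have ae: "AE z in ?U \<Otimes>\<^sub>M mu0. ?Q (fst z) (snd z)"
    using L_CFM_eq_0_iff[OF v_meas assms(4)] by simp
  have Q_sets: "{z \<in> space (?U \<Otimes>\<^sub>M mu0). ?Q (fst z) (snd z)} \<in> sets (?U \<Otimes>\<^sub>M mu0)"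
  proof -
    note cfm_residual_measurable[OF v_meas assms(4), where P = P and M = M, measurable]
    have "{z \<in> space (?U \<Otimes>\<^sub>M mu0).
            v (interp P M (snd z) (fst z)) (fst z) - (nearest P M (snd z) - snd z) = 0}
          \<in> sets (?U \<Otimes>\<^sub>M mu0)"
      by measurable
    then show ?thesis
      by simp
  qed
  show ?thesis
    using ae unfolding AE_pair_iff[OF Q_sets, symmetric] AE_commute[OF Q_sets] .
qed

lemma ode_solution_interp:
  assumes "AE t in uniform_measure lborel {0..1::real}. v (interp P M X t) t = nearest P M X - X"
  shows "ode_solution v X (interp P M X)"
  unfolding ode_solution_def
proof
  let ?Q = "\<lambda>s. v (interp P M X s) s = nearest P M X - X"
  fix t :: real assume t: "t \<in> {0..1}"
  have "AE s in lborel. s \<in> {0..1} \<longrightarrow> ?Q s"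
    using assms by (subst (asm) AE_uniform_measure) auto
  then obtain N where N: "{s \<in> space lborel. \<not> (s \<in> {0..1} \<longrightarrow> ?Q s)} \<subseteq> N"
    "emeasure lborel N = 0" "N \<in> sets lborel"
    by (rule AE_E)
  have "negligible N"
    unfolding negligible_iff_null_sets using N(2,3) by (intro null_sets_completionI) auto
  have "((\<lambda>s. nearest P M X - X) has_integral (measure lborel {0..t} *\<^sub>R (nearest P M X - X))) {0..t}"
    by (rule has_integral_const_real)
  moreover have "measure lborel {0..t} *\<^sub>R (nearest P M X - X) = interp P M X t - X"
    using t by (simp add: interp_def algebra_simps)
  ultimately have "((\<lambda>s. nearest P M X - X) has_integral (interp P M X t - X)) {0..t}"
    by simp
  then show "((\<lambda>s. v (interp P M X s) s) has_integral (interp P M X t - X)) {0..t}"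
  proof (rule has_integral_spike[OF \<open>negligible N\<close>, rotated])
    fix s assume "s \<in> {0..t} - N"
    with t N(1) show "v (interp P M X s) s = nearest P M X - X"
      by auto
  qed
qed

lemma AE_flow_endpoint_eq_nearest:
  assumes "M > 0" "inj_on P {..<M}" "prob_space mu0" "sets mu0 = sets borel"
    and "(\<lambda>z. v (fst z) (snd z)) \<in> borel_measurable borel"
    and "\<forall>w. (\<lambda>z. w (fst z) (snd z)) \<in> borel_measurable borel \<longrightarrow>
                   L_CFM mu0 P M v \<le> L_CFM mu0 P M w"
    and flow: "AE X0 in mu0. (\<exists>\<gamma>. ode_solution v X0 \<gamma>) \<and>
                  (\<forall>\<gamma>. ode_solution v X0 \<gamma> \<longrightarrow> \<gamma> 1 = \<Phi> X0)"
  shows "AE X in mu0. \<Phi> X = nearest P M X"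
  using AE_cfm_minimizer_velocity[OF assms(1-6)] flow
proof eventually_elim
  case (elim X)
  then have "interp P M X 1 = \<Phi> X"
    using ode_solution_interp by blast
  then show ?case
    by (simp add: interp_def)
qed

lemma measure_PiM_PiE_power:
  assumes "prob_space M" "A \<in> sets M"
  shows "measure (PiM {..<K} (\<lambda>_. M)) (PiE {..<K} (\<lambda>_. A)) = measure M A ^ K"
proof -
  interpret M: prob_space M by (rule assms)
  interpret product_prob_space "\<lambda>_. M" "{..<K}" ..
  have "emeasure (PiM {..<K} (\<lambda>_. M)) (PiE {..<K} (\<lambda>_. A)) = (\<Prod>i<K. emeasure M A)"
    using assms(2) by (intro emeasure_PiM) auto
  also have "\<dots> = ennreal (measure M A ^ K)"
    by (simp add: M.emeasure_eq_measure ennreal_power)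
  finally show ?thesis
    by (simp add: measure_def)
qed

lemma measure_PiM_hits_all_ge:
  fixes D :: "nat \<Rightarrow> 'a set" and K :: nat
  assumes "prob_space M" and D: "\<And>i. i < m \<Longrightarrow> D i \<in> sets M"
  defines "H \<equiv> {xs \<in> space (PiM {..<K} (\<lambda>_. M)). \<forall>i<m. \<exists>k<K. xs k \<in> D i}"
  shows "H \<in> sets (PiM {..<K} (\<lambda>_. M))"
    and "1 - (\<Sum>i<m. (1 - measure M (D i)) ^ K) \<le> measure (PiM {..<K} (\<lambda>_. M)) H"
proof -
  let ?Pi = "PiM {..<K} (\<lambda>_. M)"
  interpret M: prob_space M by (rule assms)
  interpret Pi: prob_space ?Pi by (intro prob_space_PiM assms)
  define F where "F i = PiE {..<K} (\<lambda>_. space M - D i)" for i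
  have F_sets: "F i \<in> sets ?Pi" if "i < m" for i
    unfolding F_def using D[OF that] by (intro sets_PiM_I_finite) auto
  have H_eq: "H = space ?Pi - (\<Union>i<m. F i)"
    unfolding H_def F_def space_PiM by (auto simp: PiE_iff extensional_def)
  then show H_sets: "H \<in> sets ?Pi"
    using F_sets by auto
  have "measure ?Pi (\<Union>i<m. F i) \<le> (\<Sum>i<m. measure ?Pi (F i))"
    using F_sets by (intro measure_UNION_le) auto
  also have "\<dots> = (\<Sum>i<m. (1 - measure M (D i)) ^ K)"
    using D by (simp add: F_def measure_PiM_PiE_power[OF assms(1)] M.prob_compl)
  finally show "1 - (\<Sum>i<m. (1 - measure M (D i)) ^ K) \<le> measure ?Pi H"
    unfolding H_eq using F_sets by (subst Pi.prob_compl) auto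
qed

lemma AE_PiM_hits_all_cong:
  fixes K :: nat
  assumes "prob_space M" "AE x in M. \<forall>i<m. x \<in> D i \<longleftrightarrow> x \<in> E i"
  shows "AE xs in PiM {..<K} (\<lambda>_. M). (\<forall>i<m. \<exists>k<K. xs k \<in> D i) \<longleftrightarrow> (\<forall>i<m. \<exists>k<K. xs k \<in> E i)"
proof -
  have "AE xs in PiM {..<K} (\<lambda>_. M). \<forall>k\<in>{..<K}. \<forall>i<m. xs k \<in> D i \<longleftrightarrow> xs k \<in> E i"
    by (intro eventually_ball_finite ballI AE_PiM_component[OF assms(1) _ assms(2)]) auto
  then show ?thesis
    by (rule eventually_mono) (simp only: Ball_def lessThan_iff, blast)
qed

lemma measure_completion_AE_eq:
  assumes "A \<in> sets M" "B \<subseteq> space M" "AE x in M. x \<in> A \<longleftrightarrow> x \<in> B"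
  shows "measure (completion M) B = measure M A"
proof -
  have ae: "AE x in completion M. x \<in> A \<longleftrightarrow> x \<in> B"
    using assms(3) by (rule AE_completion)
  have A: "A \<in> sets (completion M)"
    using assms(1) by (rule sets_completionI_sets)
  have B: "B \<in> sets (completion M)"
    using completion.in_sets_AE[OF ae A] assms(2) by simp
  show ?thesis
    using measure_eq_AE[OF ae A B] assms(1) by simp
qed

lemma tendsto_measure_PiM_hits_all:
  fixes D :: "nat \<Rightarrow> 'a set"
  assumes "prob_space M" "\<And>i. i < m \<Longrightarrow> D i \<in> sets M" "\<And>i. i < m \<Longrightarrow> measure M (D i) > 0"
  shows "(\<lambda>K. measure (PiM {..<K} (\<lambda>_. M))
            {xs \<in> space (PiM {..<K} (\<lambda>_. M)). \<forall>i<m. \<exists>k<K. xs k \<in> D i}) \<longlonglongrightarrow> 1"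
    (is "?h \<longlonglongrightarrow> 1")
proof (rule tendsto_sandwich)
  interpret M: prob_space M by (rule assms)
  have "(\<lambda>K. (1 - measure M (D i)) ^ K) \<longlonglongrightarrow> 0" if "i < m" for i
    using assms(3)[OF that] M.prob_le_1[of "D i"] by (intro LIMSEQ_power_zero) simp
  then have "(\<lambda>K. \<Sum>i<m. (1 - measure M (D i)) ^ K) \<longlonglongrightarrow> (\<Sum>i<m. 0)"
    by (intro tendsto_sum) auto
  from tendsto_diff[OF tendsto_const[of 1] this]
  show "(\<lambda>K. 1 - (\<Sum>i<m. (1 - measure M (D i)) ^ K)) \<longlonglongrightarrow> 1"
    by simp
  show "\<forall>\<^sub>F K in sequentially. 1 - (\<Sum>i<m. (1 - measure M (D i)) ^ K) \<le> ?h K"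
    using measure_PiM_hits_all_ge(2)[where M = M and m = m and D = D, OF assms(1,2)]
    by (intro always_eventually) blast
  show "\<forall>\<^sub>F K in sequentially. ?h K \<le> 1"
    using prob_space.prob_le_1[OF prob_space_PiM[OF assms(1)]] by (intro always_eventually) blast
qed (rule tendsto_const)

lemma tendsto_measure_completion_PiM_hits_all:
  fixes D :: "nat \<Rightarrow> 'a set"
  assumes "prob_space M" "\<And>i. i < m \<Longrightarrow> D i \<in> sets M" "\<And>i. i < m \<Longrightarrow> measure M (D i) > 0"
    and "AE x in M. \<forall>i<m. x \<in> D i \<longleftrightarrow> f x = c i"
  shows "(\<lambda>K. measure (completion (PiM {..<K} (\<lambda>_. M)))
            {xs \<in> space (PiM {..<K} (\<lambda>_. M)). \<forall>i<m. \<exists>k<K. f (xs k) = c i}) \<longlonglongrightarrow> 1"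
proof -
  have eq: "measure (completion (PiM {..<K} (\<lambda>_. M)))
          {xs \<in> space (PiM {..<K} (\<lambda>_. M)). \<forall>i<m. \<exists>k<K. f (xs k) = c i}
        = measure (PiM {..<K} (\<lambda>_. M))
          {xs \<in> space (PiM {..<K} (\<lambda>_. M)). \<forall>i<m. \<exists>k<K. xs k \<in> D i}" for K :: nat
  proof (rule measure_completion_AE_eq)
    show "{xs \<in> space (PiM {..<K} (\<lambda>_. M)). \<forall>i<m. \<exists>k<K. xs k \<in> D i} \<in> sets (PiM {..<K} (\<lambda>_. M))"
      by (rule measure_PiM_hits_all_ge(1)[OF assms(1,2)])
    have "AE x in M. \<forall>i<m. x \<in> D i \<longleftrightarrow> x \<in> {x. f x = c i}"
      using assms(4) by simp
    from AE_PiM_hits_all_cong[OF assms(1) this, of K]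
    show "AE xs in PiM {..<K} (\<lambda>_. M).
        xs \<in> {xs \<in> space (PiM {..<K} (\<lambda>_. M)). \<forall>i<m. \<exists>k<K. xs k \<in> D i} \<longleftrightarrow>
        xs \<in> {xs \<in> space (PiM {..<K} (\<lambda>_. M)). \<forall>i<m. \<exists>k<K. f (xs k) = c i}"
      by (rule eventually_mono) simp
  qed auto
  show ?thesis
    unfolding eq by (rule tendsto_measure_PiM_hits_all[OF assms(1-3)])
qed

theorem corollary1:
  fixes mu0 :: "(real^'n^'n) measure"
    and P :: "nat \<Rightarrow> real^'n^'n" and M :: nat
    and v :: "real^'n^'n \<Rightarrow> real \<Rightarrow> real^'n^'n"
    and \<Phi> :: "real^'n^'n \<Rightarrow> real^'n^'n"
    and hung :: "real^'n^'n \<Rightarrow> real^'n^'n"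
  assumes perm: "\<forall>i<M. is_perm_mat (P i)"
    and distinct: "inj_on P {..<M}"
    and prob: "prob_space mu0"
    and sets_mu0: "sets mu0 = sets borel"
    and supp: "measure mu0 Bset = 1"
    and cells: "\<forall>i<M. measure mu0 (voronoi P M i) > 0"
    and v_meas: "(\<lambda>z. v (fst z) (snd z)) \<in> borel_measurable borel"
    and v_min: "\<forall>w. (\<lambda>z. w (fst z) (snd z)) \<in> borel_measurable borel \<longrightarrow>
                   L_CFM mu0 P M v \<le> L_CFM mu0 P M w"
    and flow: "AE X0 in mu0. (\<exists>\<gamma>. ode_solution v X0 \<gamma>) \<and>
                  (\<forall>\<gamma>. ode_solution v X0 \<gamma> \<longrightarrow> \<gamma> 1 = \<Phi> X0)"
    and hung: "\<forall>X. hungarian_round X (hung X)"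
  shows "(\<lambda>K. measure (completion (PiM {..<K} (\<lambda>_. mu0)))
            {xs \<in> space (PiM {..<K} (\<lambda>_. mu0)).
               \<forall>i<M. \<exists>k<K. hung (\<Phi> (xs k)) = P i}) \<longlonglongrightarrow> 1"
proof -
  interpret mu0: prob_space mu0 by (rule prob)
  define cell where "cell i = nearest P M -` {P i}" for i
  have cell_sets: "cell i \<in> sets mu0" for i
    using measurable_sets[OF nearest_measurable, of "{P i}" P M] sets_mu0 by (simp add: cell_def)
  have cell_pos: "measure mu0 (cell i) > 0" if "i < M" for i
  proof -
    have "voronoi P M i \<subseteq> cell i"
      by (auto simp: cell_def nearest_voronoi[OF that])
    then have "measure mu0 (voronoi P M i) \<le> measure mu0 (cell i)"
      by (rule mu0.finite_measure_mono[OF _ cell_sets])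
    with cells that show ?thesis
      by fastforce
  qed
  have rounding: "AE X in mu0. \<forall>i<M. X \<in> cell i \<longleftrightarrow> hung (\<Phi> X) = P i"
  proof (cases "M = 0")
    case False
    then have "hung (nearest P M X) = nearest P M X" for X
      using nearest_in_targets[of M P X] perm hungarian_round_perm_mat hung by fastforce
    with False AE_flow_endpoint_eq_nearest[OF _ distinct prob sets_mu0 v_meas v_min flow]
    show ?thesis
      by (auto simp: cell_def elim: eventually_mono)
  qed simp
  show ?thesis
    by (rule tendsto_measure_completion_PiM_hits_all[where D = cell and f = "\<lambda>X. hung (\<Phi> X)"])
      (use prob cell_sets cell_pos rounding in auto)
qed

end
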